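(* Let $G$ be a graph that has a set of twins $T=\{u_1,\dots,u_r\}$ with $r\ge 3$, and let $G_i=G-u_i$. If $S_i$ is a zero forcing set of $G_i$, then $S_i\cup\{u_i\}$ is a zero forcing set of $G$. If $S$ is a zero forcing set of $G$ with $u_i\in S$, then $S\setminus\{u_i\}$ is a zero forcing set of $G_i$. Consequently $S_i\mapsto S_i\cup\{u_i\}$ is a bijection between the zero forcing sets of $G_i$ and the zero forcing sets of $G$ containing $u_i$, and a zero forcing set $S_i$ of $G_i$ is minimal if and only if $S_i\cup\{u_i\}$ is a minimal zero forcing set of $G$.
   Context: Vertices $u,w$ of $G$ are twins if $N_G(u)=N_G(w)$ (open neighborhoods); a set of twins is a set of vertices any two of which are twins. $G-u$ is the graph obtained by deleting $u$. Zero forcing: starting with a set $S$ of blue vertices, a blue vertex $v$ may turn blue a white vertex $w$ if $w$ is the only white neighbor of $v$; $S$ is a zero forcing set if repeated application colors all vertices blue. Minimal means minimal under inclusion. *)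

theory Defs
  imports Main
begin

definition simple_graph :: "'a set \<Rightarrow> ('a \<Rightarrow> 'a \<Rightarrow> bool) \<Rightarrow> bool" where
  "simple_graph V E \<longleftrightarrow> finite V \<and> (\<forall>x y. E x y \<longrightarrow> E y x)
     \<and> (\<forall>x. \<not> E x x) \<and> (\<forall>x y. E x y \<longrightarrow> x \<in> V \<and> y \<in> V)"

definition nbhd :: "'a set \<Rightarrow> ('a \<Rightarrow> 'a \<Rightarrow> bool) \<Rightarrow> 'a \<Rightarrow> 'a set" where
  "nbhd V E v = {w \<in> V. E v w}"

definition twin_set :: "'a set \<Rightarrow> ('a \<Rightarrow> 'a \<Rightarrow> bool) \<Rightarrow> 'a set \<Rightarrow> bool" where
  "twin_set V E T \<longleftrightarrow> T \<subseteq> V \<and> (\<forall>u\<in>T. \<forall>w\<in>T. nbhd V E u = nbhd V E w)"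

definition del_vertex_edges :: "('a \<Rightarrow> 'a \<Rightarrow> bool) \<Rightarrow> 'a \<Rightarrow> 'a \<Rightarrow> 'a \<Rightarrow> bool" where
  "del_vertex_edges E u x y \<longleftrightarrow> E x y \<and> x \<noteq> u \<and> y \<noteq> u"

text \<open>Final blue set of the zero forcing process started from S: least set containing
  S \<inter> V and closed under the color change rule (a blue vertex v with all neighbors
  except w blue forces its neighbor w).\<close>
inductive_set zf_closure :: "'a set \<Rightarrow> ('a \<Rightarrow> 'a \<Rightarrow> bool) \<Rightarrow> 'a set \<Rightarrow> 'a set"
  for V E S where
  init: "s \<in> S \<Longrightarrow> s \<in> V \<Longrightarrow> s \<in> zf_closure V E S"
| force: "v \<in> zf_closure V E S \<Longrightarrow> w \<in> nbhd V E v \<Longrightarrow>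
          (\<forall>x \<in> nbhd V E v. x \<noteq> w \<longrightarrow> x \<in> zf_closure V E S) \<Longrightarrow>
          w \<in> zf_closure V E S"

definition zero_forcing_set :: "'a set \<Rightarrow> ('a \<Rightarrow> 'a \<Rightarrow> bool) \<Rightarrow> 'a set \<Rightarrow> bool" where
  "zero_forcing_set V E S \<longleftrightarrow> S \<subseteq> V \<and> zf_closure V E S = V"

definition minimal_zero_forcing_set :: "'a set \<Rightarrow> ('a \<Rightarrow> 'a \<Rightarrow> bool) \<Rightarrow> 'a set \<Rightarrow> bool" where
  "minimal_zero_forcing_set V E S \<longleftrightarrow> zero_forcing_set V E S
     \<and> (\<forall>S'. S' \<subset> S \<longrightarrow> \<not> zero_forcing_set V E S')"

end

theory Submission
  imports Defs "HOL-Combinatorics.Transposition"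
begin

(* Twins are interchangeable: transposing two twins is a graph automorphism, and a force
   performed by u can equally be performed by a blue twin t of u. Of two distinct twins, one
   lies in every zero forcing set, because the first of them to turn blue cannot be forced:
   the forcing vertex also sees the other twin, which is still white. Hence if u has two
   further twins a and b, every zero forcing set of G contains a or b, and removing u from it
   leaves a zero forcing set of G - u. If it avoids u, it contains a, and exchanging a for u
   first produces a strictly smaller zero forcing set of G - u; this is what makes minimality
   transfer from G - u to G. *)

lemma zf_closure_subset: "zf_closure V E S \<subseteq> V"
proof
  show "x \<in> V" if "x \<in> zf_closure V E S" for x
    using that by induction (unfold nbhd_def, blast+)
qed

lemma zero_forcing_setI:
  assumes "S \<subseteq> V" and "V \<subseteq> zf_closure V E S"
  shows "zero_forcing_set V E S"
  using assms zf_closure_subset[of V E S] unfolding zero_forcing_set_def by blast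

lemma twin_set_subset: "twin_set V E T \<Longrightarrow> T' \<subseteq> T \<Longrightarrow> twin_set V E T'"
  unfolding twin_set_def by blast

lemma twin_set_adj_iff:
  assumes "simple_graph V E" and "twin_set V E {a, b}"
  shows "E x a \<longleftrightarrow> E x b"
proof -
  have sym: "E x y \<longleftrightarrow> E y x" and edge: "E x y \<Longrightarrow> y \<in> V" for x y
    using assms(1) unfolding simple_graph_def by blast+
  have "nbhd V E a = nbhd V E b" using assms(2) unfolding twin_set_def by blast
  then have "E a x \<longleftrightarrow> E b x" using edge unfolding nbhd_def by blast
  then show ?thesis using sym by blast
qed

lemma zf_closure_image_subset:
  assumes onto: "f ` V = V"
    and adj: "\<And>x y. x \<in> V \<Longrightarrow> y \<in> V \<Longrightarrow> E (f x) (f y) \<longleftrightarrow> E x y"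
  shows "f ` zf_closure V E S \<subseteq> zf_closure V E (f ` S)"
proof
  have maps: "f x \<in> V" if "x \<in> V" for x
    using that onto by (metis imageI)
  have covers: "\<exists>z\<in>V. y = f z" if "y \<in> V" for y
    using that onto by (metis imageE)
  fix y assume "y \<in> f ` zf_closure V E S"
  then obtain x where x: "x \<in> zf_closure V E S" and y: "y = f x" by blast
  from x show "y \<in> zf_closure V E (f ` S)" unfolding y
  proof (induction rule: zf_closure.induct)
    case (init s)
    have "f s \<in> f ` S" using init(1) by (rule imageI)
    moreover have "f s \<in> V" using init(2) by (rule maps)
    ultimately show ?case by (rule zf_closure.init)
  next
    case (force v w)
    have "v \<in> V" using zf_closure_subset force.hyps(1) by (rule subsetD)
    show ?case
    proof (rule zf_closure.force[OF force.IH(1)])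
      show "f w \<in> nbhd V E (f v)"
        using force.hyps(2) \<open>v \<in> V\<close> maps adj unfolding nbhd_def by blast
      show "\<forall>x\<in>nbhd V E (f v). x \<noteq> f w \<longrightarrow> x \<in> zf_closure V E (f ` S)"
      proof (intro ballI impI)
        fix x assume x: "x \<in> nbhd V E (f v)" "x \<noteq> f w"
        then obtain z where "z \<in> V" "x = f z" using covers unfolding nbhd_def by blast
        then have "z \<in> nbhd V E v" "z \<noteq> w" using x \<open>v \<in> V\<close> adj unfolding nbhd_def by blast+
        then show "x \<in> zf_closure V E (f ` S)" using force.IH(2) \<open>x = f z\<close> by blast
      qed
    qed
  qed
qed

lemma zero_forcing_set_image:
  assumes "f ` V = V"
    and "\<And>x y. x \<in> V \<Longrightarrow> y \<in> V \<Longrightarrow> E (f x) (f y) \<longleftrightarrow> E x y"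
    and "zero_forcing_set V E S"
  shows "zero_forcing_set V E (f ` S)"
proof (rule zero_forcing_setI)
  have "S \<subseteq> V" and closure: "zf_closure V E S = V"
    using assms(3) unfolding zero_forcing_set_def by blast+
  then show "f ` S \<subseteq> V" using assms(1) by (metis image_mono)
  show "V \<subseteq> zf_closure V E (f ` S)"
    using zf_closure_image_subset[of f V E S, OF assms(1,2)] assms(1) closure by simp
qed

lemma twin_transpose_adj_iff:
  assumes "simple_graph V E" and "twin_set V E {a, b}"
  shows "E (transpose a b x) (transpose a b y) \<longleftrightarrow> E x y"
proof -
  have sym: "E x y \<longleftrightarrow> E y x" for x y
    using assms(1) unfolding simple_graph_def by blast
  have "E a z \<longleftrightarrow> E b z" for z
    using twin_set_adj_iff[OF assms, of z] sym[of a z] sym[of b z] by blast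
  then have left: "E (transpose a b z) y \<longleftrightarrow> E z y" for z y
    by (simp add: transpose_def)
  have "E (transpose a b x) (transpose a b y) \<longleftrightarrow> E (transpose a b y) x"
    using left sym by blast
  also have "\<dots> \<longleftrightarrow> E x y"
    using left sym by blast
  finally show ?thesis .
qed

lemma zero_forcing_set_twin_exchange:
  assumes "simple_graph V E" and "twin_set V E {a, b}"
    and "zero_forcing_set V E S" and "a \<in> S" and "b \<notin> S"
  shows "zero_forcing_set V E (insert b (S - {a}))"
proof -
  have "a \<in> V" "b \<in> V" using assms(2) unfolding twin_set_def by blast+
  then have "zero_forcing_set V E (transpose a b ` S)"
    using zero_forcing_set_image[OF _ _ assms(3)] twin_transpose_adj_iff[OF assms(1,2)] by simp
  moreover have "transpose a b ` S = insert b (S - {a})"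
    using assms(4,5) by (auto simp: transpose_def image_iff)
  ultimately show ?thesis by simp
qed

lemma twin_mem_zero_forcing_set:
  assumes "simple_graph V E" and "twin_set V E {a, b}" and "a \<noteq> b"
    and "zero_forcing_set V E S"
  shows "a \<in> S \<or> b \<in> S"
proof -
  have "a \<in> V" "b \<in> V" using assms(2) unfolding twin_set_def by blast+
  have "a \<in> S \<or> b \<in> S" if "x \<in> zf_closure V E S" "x \<in> {a, b}" for x
    using that
  proof (induction rule: zf_closure.induct)
    case (init s)
    then show ?case by blast
  next
    case (force v w)
    have "E v a" "E v b"
      using force.hyps(2) force.prems twin_set_adj_iff[OF assms(1,2)] unfolding nbhd_def by auto
    then have "a \<in> nbhd V E v" "b \<in> nbhd V E v"
      using \<open>a \<in> V\<close> \<open>b \<in> V\<close> unfolding nbhd_def by blast+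
    moreover obtain c where "c \<in> {a, b}" "c \<noteq> w"
      using force.prems assms(3) by blast
    ultimately show ?case
      using force.IH(2) by blast
  qed
  then show ?thesis
    using \<open>a \<in> V\<close> assms(4) unfolding zero_forcing_set_def by blast
qed

lemma nbhd_del_vertex:
  "v \<noteq> u \<Longrightarrow> nbhd (V - {u}) (del_vertex_edges E u) v = nbhd V E v - {u}"
  unfolding nbhd_def del_vertex_edges_def by blast

lemma zero_forcing_set_del_vertex_not_mem:
  "zero_forcing_set (V - {u}) (del_vertex_edges E u) S \<Longrightarrow> u \<notin> S"
  unfolding zero_forcing_set_def by blast

lemma zf_closure_del_vertex_subset:
  "zf_closure (V - {u}) (del_vertex_edges E u) S \<subseteq> zf_closure V E (insert u S)"
proof
  show "x \<in> zf_closure V E (insert u S)"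
    if "x \<in> zf_closure (V - {u}) (del_vertex_edges E u) S" for x
    using that
  proof (induction rule: zf_closure.induct)
    case (init s)
    then show ?case by (simp add: zf_closure.init)
  next
    case (force v w)
    have "v \<noteq> u"
      using force.hyps(2) unfolding nbhd_def del_vertex_edges_def by blast
    have "u \<in> zf_closure V E (insert u S)" if "u \<in> nbhd V E v"
      using that unfolding nbhd_def by (blast intro: zf_closure.init)
    then show ?case
      using zf_closure.force[OF force.IH(1)] force.hyps(2) force.IH(2)
      unfolding nbhd_del_vertex[OF \<open>v \<noteq> u\<close>] by blast
  qed
qed

lemma zero_forcing_set_insert_del_vertex:
  assumes "u \<in> V" and "zero_forcing_set (V - {u}) (del_vertex_edges E u) S"
  shows "zero_forcing_set V E (insert u S)"
proof (rule zero_forcing_setI)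
  have "S \<subseteq> V - {u}" and "zf_closure (V - {u}) (del_vertex_edges E u) S = V - {u}"
    using assms(2) unfolding zero_forcing_set_def by blast+
  moreover have "u \<in> zf_closure V E (insert u S)"
    using assms(1) by (simp add: zf_closure.init)
  ultimately show "insert u S \<subseteq> V" "V \<subseteq> zf_closure V E (insert u S)"
    using assms(1) zf_closure_del_vertex_subset[of V u E S] by blast+
qed

lemma zf_closure_subset_del_twin:
  assumes "twin_set V E {t, u}" and "t \<noteq> u" and "t \<in> S"
  shows "zf_closure V E S \<subseteq> insert u (zf_closure (V - {u}) (del_vertex_edges E u) (S - {u}))"
    (is "_ \<subseteq> insert u ?C")
proof
  have "t \<in> V" and same_nbhd: "nbhd V E t = nbhd V E u"
    using assms(1) unfolding twin_set_def by blast+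
  then have "t \<in> ?C" using assms(2,3) by (simp add: zf_closure.init)
  show "x \<in> insert u ?C" if "x \<in> zf_closure V E S" for x
    using that
  proof (induction rule: zf_closure.induct)
    case (init s)
    then show ?case by (cases "s = u") (simp_all add: zf_closure.init)
  next
    case (force v w)
    show ?case
    proof (cases "w = u")
      case False
      txt \<open>A force by the deleted vertex u is performed by its twin t instead.\<close>
      define v' where "v' = (if v = u then t else v)"
      have "v' \<noteq> u" "v' \<in> ?C" and nbhd_v': "nbhd V E v' = nbhd V E v"
        using force.IH(1) \<open>t \<in> ?C\<close> assms(2) same_nbhd unfolding v'_def by auto
      have "w \<in> ?C"
        using zf_closure.force[OF \<open>v' \<in> ?C\<close>] force.hyps(2) force.IH(2) False
        unfolding nbhd_del_vertex[OF \<open>v' \<noteq> u\<close>] nbhd_v' by blast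
      then show ?thesis by simp
    qed simp
  qed
qed

lemma zero_forcing_set_del_twin:
  assumes "twin_set V E {t, u}" and "t \<noteq> u" and "t \<in> S"
    and "zero_forcing_set V E S"
  shows "zero_forcing_set (V - {u}) (del_vertex_edges E u) (S - {u})"
proof (rule zero_forcing_setI)
  show "S - {u} \<subseteq> V - {u}" using assms(4) unfolding zero_forcing_set_def by blast
  show "V - {u} \<subseteq> zf_closure (V - {u}) (del_vertex_edges E u) (S - {u})"
    using zf_closure_subset_del_twin[OF assms(1-3)] assms(4)
    unfolding zero_forcing_set_def by blast
qed

lemma zero_forcing_set_del_vertex_of_three_twins:
  assumes "simple_graph V E" and "twin_set V E {u, a, b}" and "distinct [u, a, b]"
    and "zero_forcing_set V E S"
  shows "zero_forcing_set (V - {u}) (del_vertex_edges E u) (S - {u})"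
proof -
  have "twin_set V E {a, b}" using assms(2) by (rule twin_set_subset) blast
  then obtain t where "t \<in> {a, b}" "t \<in> S"
    using twin_mem_zero_forcing_set[OF assms(1) _ _ assms(4)] assms(3) by auto
  moreover have "twin_set V E {t, u}" if "t \<in> {a, b}"
    by (rule twin_set_subset[OF assms(2)]) (use that in blast)
  ultimately show ?thesis
    using zero_forcing_set_del_twin[OF _ _ _ assms(4)] assms(3) by auto
qed

lemma zero_forcing_set_shrinks_to_del_vertex:
  assumes "simple_graph V E" and "twin_set V E {u, a, b}" and "distinct [u, a, b]"
    and "zero_forcing_set V E S"
  shows "\<exists>R. R \<subset> S \<and> zero_forcing_set (V - {u}) (del_vertex_edges E u) R"
proof (cases "u \<in> S")
  case True
  then have "S - {u} \<subset> S" by blast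
  then show ?thesis using zero_forcing_set_del_vertex_of_three_twins[OF assms] by blast
next
  case False
  have twins_ua: "twin_set V E {u, a}" using assms(2) by (rule twin_set_subset) blast
  then have "a \<in> S"
    using twin_mem_zero_forcing_set[OF assms(1) _ _ assms(4)] False assms(3) by auto
  txt \<open>Exchanging a for its twin u reduces this case to the previous one.\<close>
  have "twin_set V E {a, u}" using twins_ua by (simp add: insert_commute)
  then have "zero_forcing_set V E (insert u (S - {a}))"
    using zero_forcing_set_twin_exchange[OF assms(1) _ assms(4) \<open>a \<in> S\<close> False] by blast
  then have "zero_forcing_set (V - {u}) (del_vertex_edges E u) (insert u (S - {a}) - {u})"
    by (rule zero_forcing_set_del_vertex_of_three_twins[OF assms(1-3)])
  moreover have "insert u (S - {a}) - {u} = S - {a}" using False by blast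
  ultimately have "zero_forcing_set (V - {u}) (del_vertex_edges E u) (S - {a})" by simp
  moreover have "S - {a} \<subset> S" using \<open>a \<in> S\<close> by blast
  ultimately show ?thesis by blast
qed

lemma minimal_zero_forcing_set_insert_iff:
  assumes "u \<in> V"
    and shrink: "\<And>S'. zero_forcing_set V E S' \<Longrightarrow>
      \<exists>R. R \<subset> S' \<and> zero_forcing_set (V - {u}) (del_vertex_edges E u) R"
    and S: "zero_forcing_set (V - {u}) (del_vertex_edges E u) S"
  shows "minimal_zero_forcing_set (V - {u}) (del_vertex_edges E u) S
    \<longleftrightarrow> minimal_zero_forcing_set V E (insert u S)"
proof -
  note u_notin = zero_forcing_set_del_vertex_not_mem
  have "(\<exists>R. R \<subset> S \<and> zero_forcing_set (V - {u}) (del_vertex_edges E u) R)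
    \<longleftrightarrow> (\<exists>S'. S' \<subset> insert u S \<and> zero_forcing_set V E S')"
  proof
    assume "\<exists>R. R \<subset> S \<and> zero_forcing_set (V - {u}) (del_vertex_edges E u) R"
    then obtain R where "R \<subset> S" and R: "zero_forcing_set (V - {u}) (del_vertex_edges E u) R"
      by blast
    then have "insert u R \<subset> insert u S" using u_notin[OF S] by auto
    moreover have "zero_forcing_set V E (insert u R)"
      using assms(1) R by (rule zero_forcing_set_insert_del_vertex)
    ultimately show "\<exists>S'. S' \<subset> insert u S \<and> zero_forcing_set V E S'" by blast
  next
    assume "\<exists>S'. S' \<subset> insert u S \<and> zero_forcing_set V E S'"
    then obtain S' where "S' \<subset> insert u S" "zero_forcing_set V E S'" by blast
    moreover obtain R where "R \<subset> S'" and R: "zero_forcing_set (V - {u}) (del_vertex_edges E u) R"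
      using shrink[OF \<open>zero_forcing_set V E S'\<close>] by blast
    txt \<open>R misses u and is a proper subset of S', so it cannot be all of S.\<close>
    ultimately have "R \<subset> S" using u_notin[OF R] u_notin[OF S] by auto
    then show "\<exists>R. R \<subset> S \<and> zero_forcing_set (V - {u}) (del_vertex_edges E u) R"
      using R by blast
  qed
  then show ?thesis
    using S zero_forcing_set_insert_del_vertex[OF assms(1) S]
    unfolding minimal_zero_forcing_set_def by blast
qed

theorem proposition3p6:
  fixes V :: "'a set" and E :: "'a \<Rightarrow> 'a \<Rightarrow> bool" and T :: "'a set" and u :: 'a
  assumes "simple_graph V E"
    and "twin_set V E T" and "card T \<ge> 3"
    and "u \<in> T"
  shows "(\<forall>S. zero_forcing_set (V - {u}) (del_vertex_edges E u) S
              \<longrightarrow> zero_forcing_set V E (insert u S))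
       \<and> (\<forall>S. zero_forcing_set V E S \<and> u \<in> S
              \<longrightarrow> zero_forcing_set (V - {u}) (del_vertex_edges E u) (S - {u}))
       \<and> bij_betw (\<lambda>S. insert u S)
            {S. zero_forcing_set (V - {u}) (del_vertex_edges E u) S}
            {S. zero_forcing_set V E S \<and> u \<in> S}
       \<and> (\<forall>S. zero_forcing_set (V - {u}) (del_vertex_edges E u) S
              \<longrightarrow> (minimal_zero_forcing_set (V - {u}) (del_vertex_edges E u) S
                   \<longleftrightarrow> minimal_zero_forcing_set V E (insert u S)))"
proof -
  have "T \<subseteq> V" and "finite V" using assms(1,2) unfolding twin_set_def simple_graph_def by blast+
  then have "u \<in> V" and "2 \<le> card (T - {u})"
    using assms(3,4) finite_subset[of T V] by auto
  then obtain a b where "{a, b} \<subseteq> T - {u}" and "a \<noteq> b"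
    using obtain_subset_with_card_n[of 2 "T - {u}"] card_2_iff by metis
  then have twins: "twin_set V E {u, a, b}" and distinct: "distinct [u, a, b]"
    using twin_set_subset[OF assms(2)] assms(4) by auto
  note insert_u = zero_forcing_set_insert_del_vertex[OF \<open>u \<in> V\<close>]
  note remove_u = zero_forcing_set_del_vertex_of_three_twins[OF assms(1) twins distinct]
  have "bij_betw (\<lambda>S. insert u S)
      {S. zero_forcing_set (V - {u}) (del_vertex_edges E u) S}
      {S. zero_forcing_set V E S \<and> u \<in> S}"
    by (rule bij_betw_byWitness[where f' = "\<lambda>S. S - {u}"])
      (auto simp: insert_u remove_u zero_forcing_set_del_vertex_not_mem)
  moreover note minimal_zero_forcing_set_insert_iff[OF \<open>u \<in> V\<close>
      zero_forcing_set_shrinks_to_del_vertex[OF assms(1) twins distinct]]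
  ultimately show ?thesis using insert_u remove_u by simp
qed

end
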